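(* Let $(M,g)$ be a space-time of dimension $n>3$ with smooth, non-collinear vector fields $u,w$ satisfying $u^ku_k=w^kw_k=-1$, $\nabla_iu_j=\varphi(u_iu_j+g_{ij})$ and $\nabla_iw_j=\lambda(w_iw_j+g_{ij})$ for scalar fields $\varphi,\lambda$. Suppose $\nabla_k\varphi=-u_k\,u^m\nabla_m\varphi+v\,b_k$ with $v\neq0$, $b^kb_k=1$, $u^kb_k=0$, and $w_i=u_i\cosh\alpha+b_i\sinh\alpha$ with $\alpha\neq0$. Then the Weyl tensor satisfies $$(u^ru^s+b^rb^s)\,C_{rijs}=(u_iu_j+b_ib_j)\,(b^kb^lE_{kl}),$$ where $E_{ij}=u^ru^sC_{rijs}$.
   Context: A space-time is a Lorentzian manifold with metric of signature $(-,+,\dots,+)$; $\nabla$ is its Levi-Civita connection. The Riemann tensor is defined by $[\nabla_i,\nabla_j]X_k=R_{ijkm}X^m$, and $C_{ijkl}$ is the corresponding Weyl (conformal curvature) tensor. $E_{ij}=u^ru^sC_{rijs}$ is the electric component of the Weyl tensor with respect to $u$; it satisfies $E_{ij}u^i=0$ and $E^i{}_i=0$. *)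

theory Defs
  imports "HOL-Analysis.Analysis"
begin

text \<open>Local-coordinate rendering of (pseudo-)Riemannian geometry on an open
set U of R^n (coordinates indexed by the finite type 'n).  Tensor fields are
given by their coordinate components; all indices are lowered unless raised
explicitly with the inverse metric.\<close>

definition pd :: "'n::finite \<Rightarrow> (real^'n \<Rightarrow> real) \<Rightarrow> real^'n \<Rightarrow> real" where
  "pd i f x = frechet_derivative f (at x) (axis i 1)"

fun pds :: "'n::finite list \<Rightarrow> (real^'n \<Rightarrow> real) \<Rightarrow> real^'n \<Rightarrow> real" where
  "pds [] f = f"
| "pds (k # ks) f = pd k (pds ks f)"

definition smooth_on_set :: "(real^'n::finite) set \<Rightarrow> (real^'n \<Rightarrow> real) \<Rightarrow> bool" where
  "smooth_on_set U f \<longleftrightarrow> (\<forall>ks. \<forall>x\<in>U. pds ks f differentiable (at x))"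

definition lorentzian_form :: "('n::finite \<Rightarrow> 'n \<Rightarrow> real) \<Rightarrow> bool" where
  "lorentzian_form G \<longleftrightarrow> (\<forall>i j. G i j = G j i) \<and>
     (\<exists>P::real^'n^'n. invertible P \<and> (\<exists>i0. \<forall>a b.
        (\<Sum>i\<in>UNIV. \<Sum>j\<in>UNIV. P$i$a * G i j * P$j$b) =
        (if a = b then (if a = i0 then -1 else 1) else 0)))"

type_synonym 'n metric = "real^'n \<Rightarrow> 'n \<Rightarrow> 'n \<Rightarrow> real"
type_synonym 'n covf = "real^'n \<Rightarrow> 'n \<Rightarrow> real"

definition ginv :: "'n::finite metric \<Rightarrow> real^'n \<Rightarrow> 'n \<Rightarrow> 'n \<Rightarrow> real" where
  "ginv g x k l = matrix_inv (\<chi> i j. g x i j) $ k $ l"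

definition up :: "'n::finite metric \<Rightarrow> 'n covf \<Rightarrow> real^'n \<Rightarrow> 'n \<Rightarrow> real" where
  "up g X x k = (\<Sum>l\<in>UNIV. ginv g x k l * X x l)"

definition christoffel :: "'n::finite metric \<Rightarrow> real^'n \<Rightarrow> 'n \<Rightarrow> 'n \<Rightarrow> 'n \<Rightarrow> real" where
  "christoffel g x k i j = (1/2) * (\<Sum>l\<in>UNIV. ginv g x k l *
     (pd i (\<lambda>y. g y j l) x + pd j (\<lambda>y. g y i l) x - pd l (\<lambda>y. g y i j) x))"

definition cov :: "'n::finite metric \<Rightarrow> 'n covf \<Rightarrow> real^'n \<Rightarrow> 'n \<Rightarrow> 'n \<Rightarrow> real" where
  "cov g X x i j = pd i (\<lambda>y. X y j) x - (\<Sum>k\<in>UNIV. christoffel g x k i j * X x k)"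

text \<open>Coefficients K^a_{ijk} with [nabla_i, nabla_j] X_k = K^a_{ijk} X_a.\<close>
definition Kcurv :: "'n::finite metric \<Rightarrow> real^'n \<Rightarrow> 'n \<Rightarrow> 'n \<Rightarrow> 'n \<Rightarrow> 'n \<Rightarrow> real" where
  "Kcurv g x a i j k =
     - pd i (\<lambda>y. christoffel g y a j k) x + pd j (\<lambda>y. christoffel g y a i k) x
     + (\<Sum>b\<in>UNIV. christoffel g x b i k * christoffel g x a j b
                  - christoffel g x b j k * christoffel g x a i b)"

text \<open>Riemann tensor with the convention [nabla_i, nabla_j] X_k = R_{ijkm} X^m,
i.e. R_{ijkm} = K^a_{ijk} g_{am}.\<close>
definition Riem :: "'n::finite metric \<Rightarrow> real^'n \<Rightarrow> 'n \<Rightarrow> 'n \<Rightarrow> 'n \<Rightarrow> 'n \<Rightarrow> real" where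
  "Riem g x i j k m = (\<Sum>a\<in>UNIV. Kcurv g x a i j k * g x a m)"

definition Ric :: "'n::finite metric \<Rightarrow> real^'n \<Rightarrow> 'n \<Rightarrow> 'n \<Rightarrow> real" where
  "Ric g x j l = (\<Sum>i\<in>UNIV. \<Sum>k\<in>UNIV. ginv g x i k * Riem g x i j k l)"

definition Scal :: "'n::finite metric \<Rightarrow> real^'n \<Rightarrow> real" where
  "Scal g x = (\<Sum>j\<in>UNIV. \<Sum>l\<in>UNIV. ginv g x j l * Ric g x j l)"

definition Weyl :: "'n::finite metric \<Rightarrow> real^'n \<Rightarrow> 'n \<Rightarrow> 'n \<Rightarrow> 'n \<Rightarrow> 'n \<Rightarrow> real" where
  "Weyl g x i j k l =
     Riem g x i j k l
     - (g x i k * Ric g x j l - g x i l * Ric g x j k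
        - g x j k * Ric g x i l + g x j l * Ric g x i k) / (real CARD('n) - 2)
     + Scal g x * (g x i k * g x j l - g x i l * g x j k)
        / ((real CARD('n) - 1) * (real CARD('n) - 2))"

definition Eweyl :: "'n::finite metric \<Rightarrow> 'n covf \<Rightarrow> real^'n \<Rightarrow> 'n \<Rightarrow> 'n \<Rightarrow> real" where
  "Eweyl g u x i j = (\<Sum>r\<in>UNIV. \<Sum>s\<in>UNIV. up g u x r * up g u x s * Weyl g x r i j s)"

end

theory Submission
  imports Defs
begin

text \<open>If \<open>X\<close> is torse-forming, \<open>\<nabla>\<^sub>i X\<^sub>j = f (X\<^sub>i X\<^sub>j + g\<^sub>i\<^sub>j)\<close>, the Ricci identity gives
  \<open>R\<^sub>i\<^sub>j\<^sub>k\<^sub>m X\<^sup>m = \<nabla>\<^sub>if (X\<^sub>j X\<^sub>k + g\<^sub>j\<^sub>k) - \<nabla>\<^sub>jf (X\<^sub>i X\<^sub>k + g\<^sub>i\<^sub>k) + f\<^sup>2 (X\<^sub>j g\<^sub>i\<^sub>k - X\<^sub>i g\<^sub>j\<^sub>k)\<close>.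
  Applied to \<open>u\<close> and \<open>w\<close>, and with \<open>b = (w - u cosh \<alpha>) / sinh \<alpha>\<close>, this expresses every
  contraction of the curvature with \<open>u\<close> or \<open>b\<close> through \<open>\<phi>\<close>, \<open>\<lambda>\<close> and their gradients.
  Antisymmetry of \<open>R\<^sub>i\<^sub>j\<^sub>k\<^sub>m\<close> in \<open>(k, m)\<close>, contracted with \<open>u\<^sup>k w\<^sup>m\<close>, and the symmetry of the
  Ricci tensor then force \<open>\<nabla>\<lambda>\<close> to be an explicit combination of \<open>u\<close> and \<open>b\<close>; substituting
  everything into the definition of the Weyl tensor gives the identity.  In coordinates the
  Ricci identity and the curvature symmetries rest on Schwarz's theorem on the symmetry of
  second partial derivatives.\<close>

section \<open>Partial derivatives\<close>

lemma pd_cong_open: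
  assumes "open U" "x \<in> U" "\<And>y. y \<in> U \<Longrightarrow> f y = h y"
  shows "pd i f x = pd i h x"
proof -
  have "\<And>f'. (f has_derivative f') (at x) \<longleftrightarrow> (h has_derivative f') (at x)"
    using assms by (metis has_derivative_transform_within_open)
  then show ?thesis unfolding pd_def frechet_derivative_def by simp
qed

lemma differentiable_cong_open:
  assumes "open U" "x \<in> U" "\<And>y. y \<in> U \<Longrightarrow> f y = h y" "f differentiable (at x)"
  shows "h differentiable (at x)"
  using assms unfolding differentiable_def by (metis has_derivative_transform_within_open)

lemma pd_eq_has_derivative: "(f has_derivative f') (at x) \<Longrightarrow> pd i f x = f' (axis i 1)"
  unfolding pd_def by (metis frechet_derivative_at)

lemma pd_add:
  "f differentiable (at x) \<Longrightarrow> h differentiable (at x) \<Longrightarrow>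
   pd i (\<lambda>y. f y + h y) x = pd i f x + pd i h x"
  by (rule trans[OF pd_eq_has_derivative[OF has_derivative_add[OF
        frechet_derivative_works[THEN iffD1] frechet_derivative_works[THEN iffD1]]]])
     (auto simp: pd_def)

lemma pd_diff:
  "f differentiable (at x) \<Longrightarrow> h differentiable (at x) \<Longrightarrow>
   pd i (\<lambda>y. f y - h y) x = pd i f x - pd i h x"
  by (rule trans[OF pd_eq_has_derivative[OF has_derivative_diff[OF
        frechet_derivative_works[THEN iffD1] frechet_derivative_works[THEN iffD1]]]])
     (auto simp: pd_def)

lemma pd_mult:
  "f differentiable (at x) \<Longrightarrow> h differentiable (at x) \<Longrightarrow>
   pd i (\<lambda>y. f y * h y) x = pd i f x * h x + f x * pd i h x"
  by (rule trans[OF pd_eq_has_derivative[OF has_derivative_mult[OF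
        frechet_derivative_works[THEN iffD1] frechet_derivative_works[THEN iffD1]]]])
     (auto simp: pd_def)

lemma pd_cmult: "f differentiable (at x) \<Longrightarrow> pd i (\<lambda>y. c * f y) x = c * pd i f x"
  using pd_mult[of "\<lambda>y. c" x f i] by (simp add: pd_def)

lemma pd_sum:
  "finite A \<Longrightarrow> (\<And>a. a \<in> A \<Longrightarrow> f a differentiable (at x)) \<Longrightarrow>
   pd i (\<lambda>y. \<Sum>a\<in>A. f a y) x = (\<Sum>a\<in>A. pd i (f a) x)"
  by (rule trans[OF pd_eq_has_derivative[OF has_derivative_sum[OF
        frechet_derivative_works[THEN iffD1]]]])
     (auto simp: pd_def)

lemma has_real_derivative_along_axis:
  fixes F :: "real^'n::finite \<Rightarrow> real"
  assumes "F differentiable (at (y + t *\<^sub>R axis k 1))"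
  shows "((\<lambda>t. F (y + t *\<^sub>R axis k 1)) has_real_derivative pd k F (y + t *\<^sub>R axis k 1)) (at t)"
proof -
  let ?F' = "frechet_derivative F (at (y + t *\<^sub>R axis k 1))"
  have line: "((\<lambda>t. y + t *\<^sub>R axis k (1::real)) has_derivative (\<lambda>s. s *\<^sub>R axis k 1)) (at t)"
    by (auto intro!: derivative_eq_intros)
  have "((\<lambda>t. F (y + t *\<^sub>R axis k 1)) has_derivative (\<lambda>s. ?F' (s *\<^sub>R axis k 1))) (at t)"
    using has_derivative_compose[OF line frechet_derivative_works[THEN iffD1, OF assms]]
    by (simp add: o_def)
  moreover have "linear ?F'"
    using assms linear_frechet_derivative by blast
  ultimately show ?thesis
    unfolding has_field_derivative_def pd_def
    by (simp add: linear.scaleR mult.commute[of _ "?F' (axis k 1)"])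
qed

lemma axis_steps_in_ball:
  fixes x :: "real^'n::finite"
  assumes "ball x d \<subseteq> U" "0 \<le> s" "s \<le> h" "0 \<le> t" "t \<le> h" "2*h < d"
  shows "(x + t *\<^sub>R axis j 1) + s *\<^sub>R axis i 1 \<in> U"
    and "dist ((x + t *\<^sub>R axis j 1) + s *\<^sub>R axis i 1) x \<le> 2*h"
proof -
  have "dist ((x + t *\<^sub>R axis j 1) + s *\<^sub>R axis i 1) x = norm (t *\<^sub>R axis j (1::real) + s *\<^sub>R axis i 1)"
    by (simp add: dist_norm algebra_simps)
  also have "\<dots> \<le> norm (t *\<^sub>R axis j (1::real)) + norm (s *\<^sub>R axis i (1::real))"
    by (rule norm_triangle_ineq)
  also have "\<dots> = t + s" using assms by simp
  finally have d: "dist ((x + t *\<^sub>R axis j 1) + s *\<^sub>R axis i 1) x \<le> t + s" .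
  then show "dist ((x + t *\<^sub>R axis j 1) + s *\<^sub>R axis i 1) x \<le> 2*h" using assms by linarith
  show "(x + t *\<^sub>R axis j 1) + s *\<^sub>R axis i 1 \<in> U"
    using d assms by (intro subsetD[OF assms(1)]) (simp add: dist_commute)
qed

lemma second_difference_mean_value:
  fixes f :: "real^'n::finite \<Rightarrow> real"
  assumes B: "ball x d \<subseteq> U" and h: "0 < h" "2*h < d"
    and df: "\<And>y. y\<in>U \<Longrightarrow> f differentiable (at y)"
    and dfi: "\<And>y. y\<in>U \<Longrightarrow> pd i f differentiable (at y)"
  shows "\<exists>\<xi>. dist \<xi> x \<le> 2*h \<and>
     f ((x + h *\<^sub>R axis j 1) + h *\<^sub>R axis i 1) - f (x + h *\<^sub>R axis i 1) - f (x + h *\<^sub>R axis j 1) + f x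
     = h * (h * pd j (pd i f) \<xi>)"
proof -
  let ?ei = "axis i (1::real)" and ?ej = "axis j (1::real)"
  have P: "\<And>s t. 0 \<le> s \<Longrightarrow> s \<le> h \<Longrightarrow> 0 \<le> t \<Longrightarrow> t \<le> h \<Longrightarrow> (x + t *\<^sub>R ?ej) + s *\<^sub>R ?ei \<in> U"
    using axis_steps_in_ball(1)[OF B _ _ _ _ h(2)] by blast
  have P0: "\<And>s. 0 \<le> s \<Longrightarrow> s \<le> h \<Longrightarrow> x + s *\<^sub>R ?ei \<in> U"
    using P[of _ 0] h by simp
  have "\<exists>z. 0 < z \<and> z < h \<and>
      (f ((x + h *\<^sub>R ?ej) + h *\<^sub>R ?ei) - f (x + h *\<^sub>R ?ei)) - (f ((x + h *\<^sub>R ?ej) + 0 *\<^sub>R ?ei) - f (x + 0 *\<^sub>R ?ei))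
      = (h - 0) * (pd i f ((x + h *\<^sub>R ?ej) + z *\<^sub>R ?ei) - pd i f (x + z *\<^sub>R ?ei))"
    apply (rule MVT2[where f="\<lambda>s. f ((x + h *\<^sub>R ?ej) + s *\<^sub>R ?ei) - f (x + s *\<^sub>R ?ei)"])
    using h apply simp
    apply (rule DERIV_diff)
     apply (rule has_real_derivative_along_axis, rule df, rule P, simp_all add: h(1)[THEN less_imp_le])
    apply (rule has_real_derivative_along_axis, rule df, rule P0, simp_all)
    done
  then obtain \<sigma> where \<sigma>: "0 < \<sigma>" "\<sigma> < h" and e1:
      "(f ((x + h *\<^sub>R ?ej) + h *\<^sub>R ?ei) - f (x + h *\<^sub>R ?ei)) - (f (x + h *\<^sub>R ?ej) - f x)
      = h * (pd i f ((x + h *\<^sub>R ?ej) + \<sigma> *\<^sub>R ?ei) - pd i f (x + \<sigma> *\<^sub>R ?ei))"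
    by auto
  have "\<exists>z. 0 < z \<and> z < h \<and>
      pd i f ((x + \<sigma> *\<^sub>R ?ei) + h *\<^sub>R ?ej) - pd i f ((x + \<sigma> *\<^sub>R ?ei) + 0 *\<^sub>R ?ej)
      = (h - 0) * pd j (pd i f) ((x + \<sigma> *\<^sub>R ?ei) + z *\<^sub>R ?ej)"
    apply (rule MVT2[where f="\<lambda>t. pd i f ((x + \<sigma> *\<^sub>R ?ei) + t *\<^sub>R ?ej)"])
    using h apply simp
    apply (rule has_real_derivative_along_axis, rule dfi)
    using P[of \<sigma>] \<sigma> apply (simp add: algebra_simps)
    done
  then obtain \<tau> where \<tau>: "0 < \<tau>" "\<tau> < h" and e2:
      "pd i f ((x + \<sigma> *\<^sub>R ?ei) + h *\<^sub>R ?ej) - pd i f (x + \<sigma> *\<^sub>R ?ei)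
      = h * pd j (pd i f) ((x + \<sigma> *\<^sub>R ?ei) + \<tau> *\<^sub>R ?ej)"
    by auto
  have "(x + \<sigma> *\<^sub>R ?ei) + h *\<^sub>R ?ej = (x + h *\<^sub>R ?ej) + \<sigma> *\<^sub>R ?ei"
     "(x + \<sigma> *\<^sub>R ?ei) + \<tau> *\<^sub>R ?ej = (x + \<tau> *\<^sub>R ?ej) + \<sigma> *\<^sub>R ?ei"
    by (simp_all add: algebra_simps)
  with e1 e2 have "f ((x + h *\<^sub>R ?ej) + h *\<^sub>R ?ei) - f (x + h *\<^sub>R ?ei) - f (x + h *\<^sub>R ?ej) + f x
      = h * (h * pd j (pd i f) ((x + \<tau> *\<^sub>R ?ej) + \<sigma> *\<^sub>R ?ei))"
    by (simp add: algebra_simps)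
  moreover have "dist ((x + \<tau> *\<^sub>R ?ej) + \<sigma> *\<^sub>R ?ei) x \<le> 2*h"
    using axis_steps_in_ball(2)[OF B _ _ _ _ h(2)] \<sigma> \<tau> by simp
  ultimately show ?thesis by blast
qed

text \<open>Schwarz's theorem: both mixed partials are limits of the same second difference quotient.\<close>

lemma pd_commute:
  fixes f :: "real^'n::finite \<Rightarrow> real"
  assumes U: "open U" "x \<in> U"
    and df: "\<And>y. y\<in>U \<Longrightarrow> f differentiable (at y)"
    and dfi: "\<And>y. y\<in>U \<Longrightarrow> pd i f differentiable (at y)"
    and dfj: "\<And>y. y\<in>U \<Longrightarrow> pd j f differentiable (at y)"
    and cij: "isCont (pd j (pd i f)) x" and cji: "isCont (pd i (pd j f)) x"
  shows "pd j (pd i f) x = pd i (pd j f) x"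
proof (rule ccontr)
  assume ne: "pd j (pd i f) x \<noteq> pd i (pd j f) x"
  define e where "e = \<bar>pd j (pd i f) x - pd i (pd j f) x\<bar> / 3"
  have e: "e > 0" using ne by (simp add: e_def)
  obtain d where d: "d > 0" "ball x d \<subseteq> U" using U open_contains_ball by blast
  obtain d1 where d1: "d1 > 0" "\<And>y. dist y x < d1 \<Longrightarrow> dist (pd j (pd i f) y) (pd j (pd i f) x) < e"
    using cij e unfolding continuous_at_eps_delta by blast
  obtain d2 where d2: "d2 > 0" "\<And>y. dist y x < d2 \<Longrightarrow> dist (pd i (pd j f) y) (pd i (pd j f) x) < e"
    using cji e unfolding continuous_at_eps_delta by blast
  define h where "h = Min {d, d1, d2} / 4"
  have h: "0 < h" "2*h < d" "2*h < d1" "2*h < d2" using d d1 d2 by (auto simp: h_def)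
  obtain a where a: "dist a x \<le> 2*h" and ea:
    "f ((x + h *\<^sub>R axis j 1) + h *\<^sub>R axis i 1) - f (x + h *\<^sub>R axis i 1) - f (x + h *\<^sub>R axis j 1) + f x
     = h * (h * pd j (pd i f) a)"
    using second_difference_mean_value[OF d(2) h(1,2) df dfi] by blast
  obtain b where b: "dist b x \<le> 2*h" and eb:
    "f ((x + h *\<^sub>R axis i 1) + h *\<^sub>R axis j 1) - f (x + h *\<^sub>R axis j 1) - f (x + h *\<^sub>R axis i 1) + f x
     = h * (h * pd i (pd j f) b)"
    using second_difference_mean_value[OF d(2) h(1,2) df dfj] by blast
  have "(x + h *\<^sub>R axis i 1) + h *\<^sub>R axis j 1 = (x + h *\<^sub>R axis j 1) + h *\<^sub>R axis i (1::real)"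
    by (simp add: algebra_simps)
  then have "h * (h * pd j (pd i f) a) = h * (h * pd i (pd j f) b)" using ea eb by (simp only:)
  then have ab: "pd j (pd i f) a = pd i (pd j f) b" using h(1) by simp
  have "dist (pd j (pd i f) a) (pd j (pd i f) x) < e" using d1(2) a h by simp
  moreover have "dist (pd i (pd j f) b) (pd i (pd j f) x) < e" using d2(2) b h by simp
  ultimately show False using ab e_def e unfolding dist_real_def by argo
qed

lemma smooth_on_set_differentiable: "smooth_on_set U f \<Longrightarrow> x \<in> U \<Longrightarrow> f differentiable (at x)"
  unfolding smooth_on_set_def using pds.simps(1) by metis

lemma smooth_on_set_pd_differentiable:
  "smooth_on_set U f \<Longrightarrow> x \<in> U \<Longrightarrow> pd k f differentiable (at x)"
  unfolding smooth_on_set_def by (metis pds.simps)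

lemma smooth_on_set_pd_pd_differentiable:
  "smooth_on_set U f \<Longrightarrow> x \<in> U \<Longrightarrow> pd k (pd l f) differentiable (at x)"
  unfolding smooth_on_set_def by (metis pds.simps)

lemma smooth_on_set_pd_commute:
  assumes "open U" "smooth_on_set U f" "x \<in> U"
  shows "pd i (pd j f) x = pd j (pd i f) x"
proof -
  have "\<And>k l. isCont (pd k (pd l f)) x"
    using smooth_on_set_pd_pd_differentiable[OF assms(2,3)] differentiable_imp_continuous_within
    by blast
  then show ?thesis
    by (intro pd_commute[OF assms(1,3)])
       (auto intro: smooth_on_set_differentiable smooth_on_set_pd_differentiable assms)
qed

section \<open>The metric and its inverse\<close>

lemma lorentzian_form_sym: "lorentzian_form G \<Longrightarrow> G i j = G j i"
  unfolding lorentzian_form_def by blast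

lemma lorentzian_form_det_nonzero:
  fixes G :: "'n::finite \<Rightarrow> 'n \<Rightarrow> real"
  assumes "lorentzian_form G"
  shows "det (\<chi> i j. G i j) \<noteq> 0"
proof -
  obtain P :: "real^'n^'n" and i0 where
    D: "\<And>a b. (\<Sum>i\<in>UNIV. \<Sum>j\<in>UNIV. P$i$a * G i j * P$j$b) = (if a = b then (if a = i0 then -1 else 1) else 0)"
    using assms unfolding lorentzian_form_def by blast
  let ?A = "(\<chi> i j. G i j) :: real^'n^'n"
  let ?D = "(\<chi> a b. if a = b then (if a = i0 then -1 else 1) else 0) :: real^'n^'n"
  have "\<And>a b. (transpose P ** ?A ** P)$a$b = (\<Sum>i\<in>UNIV. \<Sum>j\<in>UNIV. P$i$a * G i j * P$j$b)"
    by (simp add: matrix_matrix_mult_def transpose_def sum_distrib_right, subst sum.swap)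
       (simp add: mult.commute mult.left_commute)
  then have "transpose P ** ?A ** P = ?D" using D by (simp add: vec_eq_iff)
  then have "det (transpose P) * det ?A * det P = det ?D" by (metis det_mul)
  moreover have "det ?D = (\<Prod>i\<in>UNIV. if i = i0 then -1 else 1)"
    by (subst det_diagonal) auto
  moreover have "(\<Prod>i\<in>UNIV. (if i = i0 then -1 else 1::real)) \<noteq> 0"
    by (simp add: prod_zero_iff)
  ultimately show ?thesis by auto
qed

lemma det_differentiable:
  fixes h :: "'n::finite \<Rightarrow> 'n \<Rightarrow> 'a::real_normed_vector \<Rightarrow> real"
  assumes "\<And>i j. h i j differentiable (at x)"
  shows "(\<lambda>y. det ((\<chi> i j. h i j y) :: real^'n^'n)) differentiable (at x)"
proof -
  have "(\<lambda>y. \<Prod>i\<in>UNIV. h i (p i) y) differentiable (at x)" for p :: "'n \<Rightarrow> 'n"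
    by (rule differentiableI[OF has_derivative_prod[OF frechet_derivative_works[THEN iffD1, OF assms]]])
  then show ?thesis
    unfolding det_def by (intro differentiable_sum ballI differentiable_mult differentiable_const) auto
qed

lemma matrix_inv_mult_det_nonzero:
  fixes A :: "real^'n::finite^'n"
  assumes "det A \<noteq> 0"
  shows "A ** matrix_inv A = mat 1" "matrix_inv A ** A = mat 1"
  using assms invertible_det_nz[of A]
  unfolding matrix_inv_def invertible_def by (metis (mono_tags, lifting) someI_ex)+

lemma matrix_inv_cramer:
  fixes A :: "real^'n::finite^'n"
  assumes "det A \<noteq> 0"
  shows "matrix_inv A $ k $ l =
    det ((\<chi> i j. if j = k then (if i = l then 1 else 0) else A$i$j) :: real^'n^'n) / det A"
proof -
  define xv where "xv = matrix_inv A *v axis l 1"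
  have "A *v xv = axis l 1"
    unfolding xv_def by (simp add: matrix_vector_mul_assoc matrix_inv_mult_det_nonzero[OF assms])
  then have c: "det ((\<chi> i j. if j = k then (axis l 1)$i else A$i$j) :: real^'n^'n) = xv$k * det A"
    using cramer_lemma[where A=A and x=xv and k=k] by (simp only:)
  have "xv $ k = matrix_inv A $ k $ l"
    unfolding xv_def matrix_vector_mult_def axis_def
    by (simp add: if_distrib cong: if_cong)
  moreover have "(\<chi> i j. if j = k then (axis l (1::real))$i else A$i$j) =
     (\<chi> i j. if j = k then (if i = l then 1 else 0) else A$i$j)"
    by (simp add: axis_def vec_eq_iff)
  ultimately show ?thesis using c assms by (simp add: field_simps)
qed

locale lorentzian_chart =
  fixes U :: "(real^'n::finite) set" and g :: "'n metric"
  assumes U_open: "open U"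
    and g_smooth: "\<And>i j. smooth_on_set U (\<lambda>x. g x i j)"
    and g_lor: "\<And>x. x \<in> U \<Longrightarrow> lorentzian_form (g x)"
begin

lemma metric_sym: "x \<in> U \<Longrightarrow> g x i j = g x j i"
  using g_lor lorentzian_form_sym by blast

lemma metric_det_nonzero: "x \<in> U \<Longrightarrow> det ((\<chi> i j. g x i j) :: real^'n^'n) \<noteq> 0"
  using g_lor lorentzian_form_det_nonzero by blast

lemma ginv_metric:
  assumes x: "x \<in> U"
  shows "(\<Sum>m\<in>UNIV. ginv g x k m * g x m l) = (if k = l then 1 else 0)"
proof -
  have "(matrix_inv (\<chi> i j. g x i j) ** (\<chi> i j. g x i j)) $ k $ l = (mat 1 :: real^'n^'n) $ k $ l"
    using matrix_inv_mult_det_nonzero(2)[OF metric_det_nonzero[OF x]] by simp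
  then show ?thesis by (simp add: matrix_matrix_mult_def mat_def ginv_def)
qed

lemma metric_ginv:
  assumes x: "x \<in> U"
  shows "(\<Sum>m\<in>UNIV. g x k m * ginv g x m l) = (if k = l then 1 else 0)"
proof -
  have "((\<chi> i j. g x i j) ** matrix_inv (\<chi> i j. g x i j)) $ k $ l = (mat 1 :: real^'n^'n) $ k $ l"
    using matrix_inv_mult_det_nonzero(1)[OF metric_det_nonzero[OF x]] by simp
  then show ?thesis by (simp add: matrix_matrix_mult_def mat_def ginv_def)
qed

lemma ginv_sym:
  assumes x: "x \<in> U"
  shows "ginv g x k l = ginv g x l k"
proof -
  let ?A = "(\<chi> i j. g x i j) :: real^'n^'n"
  let ?M = "matrix_inv ?A"
  note inv = matrix_inv_mult_det_nonzero[OF metric_det_nonzero[OF x]]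
  have "transpose ?A = ?A" using metric_sym[OF x] by (simp add: transpose_def vec_eq_iff)
  then have "transpose ?M ** ?A = mat 1"
    by (metis inv(1) matrix_transpose_mul transpose_mat)
  then have "transpose ?M = ?M"
    by (metis inv(1) matrix_mul_assoc matrix_mul_lid matrix_mul_rid)
  then have "transpose ?M $ l $ k = ?M $ l $ k" by simp
  then show ?thesis by (simp add: ginv_def transpose_def)
qed

lemma metric_differentiable: "x \<in> U \<Longrightarrow> (\<lambda>y. g y i j) differentiable (at x)"
  using smooth_on_set_differentiable[OF g_smooth] by blast

lemma pd_metric_differentiable: "x \<in> U \<Longrightarrow> pd k (\<lambda>y. g y i j) differentiable (at x)"
  using smooth_on_set_pd_differentiable[OF g_smooth] by blast

text \<open>Near \<open>x\<close> the inverse metric is a quotient of determinants (Cramer's rule), hence differentiable.\<close>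

lemma ginv_differentiable:
  assumes x: "x \<in> U"
  shows "(\<lambda>y. ginv g y k l) differentiable (at x)"
proof -
  let ?N = "\<lambda>y. det ((\<chi> i j. if j = k then (if i = l then 1 else 0) else g y i j) :: real^'n^'n)"
  let ?D = "\<lambda>y. det ((\<chi> i j. g y i j) :: real^'n^'n)"
  have eq: "?N y / ?D y = ginv g y k l" if y: "y \<in> U" for y
  proof -
    have m: "((\<chi> i j. if j = k then (if i = l then 1 else 0) else ((\<chi> i j. g y i j)::real^'n^'n)$i$j) :: real^'n^'n)
       = (\<chi> i j. if j = k then (if i = l then 1 else 0) else g y i j)"
      by (simp add: vec_eq_iff)
    show ?thesis
      unfolding ginv_def matrix_inv_cramer[OF metric_det_nonzero[OF y], of k l] m ..
  qed
  moreover have "?N differentiable (at x)"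
    by (rule det_differentiable, case_tac "j = k"; case_tac "i = l")
       (simp_all add: metric_differentiable[OF x])
  moreover have "?D differentiable (at x)"
    by (rule det_differentiable) (simp add: metric_differentiable[OF x])
  ultimately have "(\<lambda>y. ?N y / ?D y) differentiable (at x)"
    using metric_det_nonzero[OF x] by (intro differentiable_divide) auto
  then show ?thesis
    using differentiable_cong_open[OF U_open x, where f="\<lambda>y. ?N y / ?D y" and h="\<lambda>y. ginv g y k l"] eq
    by blast
qed

lemma pd_metric_sym: "y \<in> U \<Longrightarrow> pd k (\<lambda>y. g y i j) y = pd k (\<lambda>y. g y j i) y"
  by (rule pd_cong_open[OF U_open]) (auto intro: metric_sym)

lemma christoffel_differentiable: "x \<in> U \<Longrightarrow> (\<lambda>y. christoffel g y a i j) differentiable (at x)"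
  unfolding christoffel_def
  by (intro differentiable_mult differentiable_const differentiable_sum ballI finite
     differentiable_add differentiable_diff ginv_differentiable pd_metric_differentiable) auto

lemma christoffel_sym: "y \<in> U \<Longrightarrow> christoffel g y a i j = christoffel g y a j i"
  unfolding christoffel_def using pd_metric_sym by (simp add: ac_simps)

lemma christoffel_lower:
  assumes y: "y \<in> U"
  shows "(\<Sum>a\<in>UNIV. christoffel g y a j k * g y a m) =
   (1/2) * (pd j (\<lambda>y. g y k m) y + pd k (\<lambda>y. g y j m) y - pd m (\<lambda>y. g y j k) y)"
proof -
  have "(\<Sum>a\<in>UNIV. christoffel g y a j k * g y a m) =
     (1/2) * (\<Sum>l\<in>UNIV. (\<Sum>a\<in>UNIV. ginv g y l a * g y a m) *
       (pd j (\<lambda>y. g y k l) y + pd k (\<lambda>y. g y j l) y - pd l (\<lambda>y. g y j k) y))"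
    unfolding christoffel_def sum_distrib_left sum_distrib_right
    by (subst sum.swap, intro sum.cong refl) (simp add: ginv_sym[OF y] mult_ac)
  also have "\<dots> = (1/2) * (\<Sum>l\<in>UNIV. if l = m then
       pd j (\<lambda>y. g y k l) y + pd k (\<lambda>y. g y j l) y - pd l (\<lambda>y. g y j k) y else 0)"
    by (intro arg_cong[where f="\<lambda>t. (1/2)*t"] sum.cong) (simp_all add: ginv_metric[OF y])
  finally show ?thesis by simp
qed

lemma pd_metric_christoffel:
  "y \<in> U \<Longrightarrow> pd j (\<lambda>y. g y k m) y =
   (\<Sum>a\<in>UNIV. christoffel g y a j k * g y a m) + (\<Sum>a\<in>UNIV. christoffel g y a j m * g y a k)"
  using christoffel_lower[of y j k m] christoffel_lower[of y j m k] pd_metric_sym[of y j m k] by simp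

lemma pd_cov:
  assumes x: "x \<in> U" and X: "\<And>k. smooth_on_set U (\<lambda>y. X y k)"
  shows "pd i (\<lambda>y. cov g X y j k) x = pd i (pd j (\<lambda>y. X y k)) x
     - (\<Sum>a\<in>UNIV. pd i (\<lambda>y. christoffel g y a j k) x * X x a + christoffel g x a j k * pd i (\<lambda>y. X y a) x)"
proof -
  have dX: "\<And>a. (\<lambda>y. X y a) differentiable (at x)"
    using smooth_on_set_differentiable[OF X x] .
  have "(\<lambda>y. \<Sum>a\<in>UNIV. christoffel g y a j k * X y a) differentiable (at x)"
    by (intro differentiable_sum ballI finite differentiable_mult christoffel_differentiable[OF x] dX)
  then have "pd i (\<lambda>y. cov g X y j k) x =
      pd i (pd j (\<lambda>y. X y k)) x - pd i (\<lambda>y. \<Sum>a\<in>UNIV. christoffel g y a j k * X y a) x"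
    unfolding cov_def by (intro pd_diff smooth_on_set_pd_differentiable[OF X x])
  also have "pd i (\<lambda>y. \<Sum>a\<in>UNIV. christoffel g y a j k * X y a) x =
     (\<Sum>a\<in>UNIV. pd i (\<lambda>y. christoffel g y a j k) x * X x a + christoffel g x a j k * pd i (\<lambda>y. X y a) x)"
    by (subst pd_sum) (auto intro!: sum.cong pd_mult differentiable_mult christoffel_differentiable[OF x] dX)
  finally show ?thesis .
qed

lemma ricci_identity:
  assumes x: "x \<in> U" and X: "\<And>k. smooth_on_set U (\<lambda>y. X y k)"
  shows "(\<Sum>a\<in>UNIV. Kcurv g x a i j k * X x a) =
    pd i (\<lambda>y. cov g X y j k) x - pd j (\<lambda>y. cov g X y i k) x
    + (\<Sum>a\<in>UNIV. christoffel g x a j k * cov g X x i a)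
    - (\<Sum>a\<in>UNIV. christoffel g x a i k * cov g X x j a)"
proof -
  define Ga where "Ga a p q = christoffel g x a p q" for a p q
  define dG where "dG l a p q = pd l (\<lambda>y. christoffel g y a p q) x" for l a p q
  define dX where "dX l a = pd l (\<lambda>y. X y a) x" for l a
  define Xa where "Xa a = X x a" for a
  have sw: "pd i (pd j (\<lambda>y. X y k)) x = pd j (pd i (\<lambda>y. X y k)) x"
    using smooth_on_set_pd_commute[OF U_open X x] .
  have L: "(\<Sum>a\<in>UNIV. Kcurv g x a i j k * X x a) =
     (\<Sum>a\<in>UNIV. (dG j a i k - dG i a j k) * Xa a) +
     (\<Sum>a\<in>UNIV. \<Sum>b\<in>UNIV. (Ga b i k * Ga a j b - Ga b j k * Ga a i b) * Xa a)"
    unfolding Kcurv_def Ga_def dG_def Xa_def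
    by (simp add: algebra_simps sum.distrib sum_distrib_right sum_distrib_left sum_subtractf)
  have R1: "pd i (\<lambda>y. cov g X y j k) x - pd j (\<lambda>y. cov g X y i k) x =
     (\<Sum>a\<in>UNIV. (dG j a i k - dG i a j k) * Xa a) +
     (\<Sum>a\<in>UNIV. Ga a i k * dX j a - Ga a j k * dX i a)"
    unfolding pd_cov[OF x X] sw Ga_def dG_def Xa_def dX_def
    by (simp add: algebra_simps sum.distrib sum_subtractf)
  have cv: "\<And>p a. cov g X x p a = dX p a - (\<Sum>b\<in>UNIV. Ga b p a * Xa b)"
    unfolding cov_def dX_def Ga_def Xa_def ..
  have R2: "(\<Sum>a\<in>UNIV. christoffel g x a j k * cov g X x i a)
    - (\<Sum>a\<in>UNIV. christoffel g x a i k * cov g X x j a) =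
     (\<Sum>a\<in>UNIV. Ga a j k * dX i a - Ga a i k * dX j a) +
     (\<Sum>a\<in>UNIV. \<Sum>b\<in>UNIV. Ga a i k * Ga b j a * Xa b - Ga a j k * Ga b i a * Xa b)"
    unfolding cv Ga_def[symmetric]
    by (simp add: algebra_simps sum.distrib sum_subtractf sum_distrib_left)
  have S: "(\<Sum>a\<in>UNIV. \<Sum>b\<in>UNIV. (Ga b i k * Ga a j b - Ga b j k * Ga a i b) * Xa a) =
     (\<Sum>a\<in>UNIV. \<Sum>b\<in>UNIV. Ga a i k * Ga b j a * Xa b - Ga a j k * Ga b i a * Xa b)"
    by (subst sum.swap) (simp add: algebra_simps)
  have Z: "(\<Sum>a\<in>UNIV. Ga a i k * dX j a - Ga a j k * dX i a)
      + (\<Sum>a\<in>UNIV. Ga a j k * dX i a - Ga a i k * dX j a) = 0"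
    by (simp add: sum.distrib[symmetric] algebra_simps)
  show ?thesis using L R1 R2 S Z by linarith
qed

end

section \<open>Symmetries of the curvature\<close>

lemma sum_sum_antisym_eq_0:
  fixes F :: "'a \<Rightarrow> 'a \<Rightarrow> real"
  assumes "\<And>a b. F a b = - F b a"
  shows "(\<Sum>a\<in>A. \<Sum>b\<in>A. F a b) = 0"
proof -
  have "(\<Sum>a\<in>A. \<Sum>b\<in>A. F a b) = (\<Sum>b\<in>A. \<Sum>a\<in>A. - F b a)"
    by (subst sum.swap) (intro sum.cong refl assms)
  then show ?thesis by (simp add: sum_negf)
qed

context lorentzian_chart
begin

text \<open>Applied to the covector fields \<open>g\<^sub>\<cdot>\<^sub>m\<close>, the Ricci identity expresses the Riemann tensor
  through second derivatives of the metric, since their covariant derivatives are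
  Christoffel symbols of the first kind.\<close>

lemma cov_metric_column:
  "y \<in> U \<Longrightarrow> cov g (\<lambda>y a. g y a m) y j k = (\<Sum>a\<in>UNIV. christoffel g y a j m * g y a k)"
  unfolding cov_def using pd_metric_christoffel[of y j k m] by simp

lemma pd_cov_metric_column:
  assumes x: "x \<in> U"
  shows "pd i (\<lambda>y. cov g (\<lambda>y a. g y a m) y j k) x =
    (1/2) * (pd i (pd j (\<lambda>y. g y m k)) x + pd i (pd m (\<lambda>y. g y j k)) x - pd i (pd k (\<lambda>y. g y j m)) x)"
proof -
  have "pd i (\<lambda>y. cov g (\<lambda>y a. g y a m) y j k) x =
     pd i (\<lambda>y. (1/2) * (pd j (\<lambda>y. g y m k) y + pd m (\<lambda>y. g y j k) y - pd k (\<lambda>y. g y j m) y)) x"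
    by (rule pd_cong_open[OF U_open x]) (simp add: cov_metric_column christoffel_lower)
  also have "\<dots> = (1/2) * (pd i (pd j (\<lambda>y. g y m k)) x + pd i (pd m (\<lambda>y. g y j k)) x
      - pd i (pd k (\<lambda>y. g y j m)) x)"
    using pd_metric_differentiable[OF x]
    by (simp only: pd_cmult differentiable_diff differentiable_add pd_diff pd_add)
  finally show ?thesis .
qed

lemma Riem_second_derivatives:
  assumes x: "x \<in> U"
  shows "Riem g x i j k m =
    (1/2) * (pd i (pd j (\<lambda>y. g y m k)) x + pd i (pd m (\<lambda>y. g y j k)) x - pd i (pd k (\<lambda>y. g y j m)) x)
  - (1/2) * (pd j (pd i (\<lambda>y. g y m k)) x + pd j (pd m (\<lambda>y. g y i k)) x - pd j (pd k (\<lambda>y. g y i m)) x)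
  + (\<Sum>a\<in>UNIV. christoffel g x a j k * (\<Sum>b\<in>UNIV. christoffel g x b i m * g x b a))
  - (\<Sum>a\<in>UNIV. christoffel g x a i k * (\<Sum>b\<in>UNIV. christoffel g x b j m * g x b a))"
proof -
  have "Riem g x i j k m = pd i (\<lambda>y. cov g (\<lambda>y a. g y a m) y j k) x - pd j (\<lambda>y. cov g (\<lambda>y a. g y a m) y i k) x
    + (\<Sum>a\<in>UNIV. christoffel g x a j k * cov g (\<lambda>y a. g y a m) x i a)
    - (\<Sum>a\<in>UNIV. christoffel g x a i k * cov g (\<lambda>y a. g y a m) x j a)"
    unfolding Riem_def using ricci_identity[OF x, of "\<lambda>y a. g y a m" i j k] g_smooth by simp
  then show ?thesis unfolding pd_cov_metric_column[OF x] cov_metric_column[OF x] .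
qed

lemma Riem_antisym34:
  assumes x: "x \<in> U"
  shows "Riem g x i j k m = - Riem g x i j m k"
proof -
  define D where "D p q r s = pd p (pd q (\<lambda>y. g y r s)) x" for p q r s
  have D_swap: "\<And>p q r s. D p q r s = D q p r s"
    unfolding D_def by (rule smooth_on_set_pd_commute[OF U_open g_smooth x])
  have D_sym: "\<And>p q r s. D p q r s = D p q s r"
    unfolding D_def by (rule pd_cong_open[OF U_open x]) (rule pd_metric_sym)
  define Ga where "Ga a p q = christoffel g x a p q" for a p q
  have "(\<Sum>a\<in>UNIV. Ga a j k * (\<Sum>b\<in>UNIV. Ga b i m * g x b a))
      - (\<Sum>a\<in>UNIV. Ga a i k * (\<Sum>b\<in>UNIV. Ga b j m * g x b a))
      + (\<Sum>a\<in>UNIV. Ga a j m * (\<Sum>b\<in>UNIV. Ga b i k * g x b a))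
      - (\<Sum>a\<in>UNIV. Ga a i m * (\<Sum>b\<in>UNIV. Ga b j k * g x b a)) =
    (\<Sum>a\<in>UNIV. \<Sum>b\<in>UNIV. Ga a j k * Ga b i m * g x b a - Ga a i k * Ga b j m * g x b a
        + Ga a j m * Ga b i k * g x b a - Ga a i m * Ga b j k * g x b a)"
    by (simp add: sum_distrib_left sum.distrib sum_subtractf algebra_simps)
  also have "\<dots> = 0"
    by (rule sum_sum_antisym_eq_0) (simp add: metric_sym[OF x, of _ "_"] algebra_simps)
  finally show ?thesis
    unfolding Riem_second_derivatives[OF x] D_def[symmetric] Ga_def[symmetric]
    using D_swap[of j i m k] D_swap[of j i k m] D_sym[of i j k m]
    by (simp add: algebra_simps)
qed

lemma Kcurv_antisym: "Kcurv g x a i j k = - Kcurv g x a j i k"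
  unfolding Kcurv_def by (simp add: sum_subtractf algebra_simps)

lemma Kcurv_bianchi:
  assumes x: "x \<in> U"
  shows "Kcurv g x a i j k + Kcurv g x a j k i + Kcurv g x a k i j = 0"
proof -
  define Ga where "Ga a p q = christoffel g x a p q" for a p q
  define dG where "dG l a p q = pd l (\<lambda>y. christoffel g y a p q) x" for l a p q
  have Ga_sym: "\<And>a p q. Ga a p q = Ga a q p"
    unfolding Ga_def using christoffel_sym[OF x] by blast
  have dG_sym: "\<And>l a p q. dG l a p q = dG l a q p"
    unfolding dG_def by (rule pd_cong_open[OF U_open x]) (rule christoffel_sym)
  have "Kcurv g x a i j k + Kcurv g x a j k i + Kcurv g x a k i j =
    (- dG i a j k + dG j a i k - dG j a k i + dG k a j i - dG k a i j + dG i a k j)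
    + (\<Sum>b\<in>UNIV. Ga b i k * Ga a j b - Ga b j k * Ga a i b + Ga b j i * Ga a k b - Ga b k i * Ga a j b
        + Ga b k j * Ga a i b - Ga b i j * Ga a k b)"
    unfolding Kcurv_def Ga_def dG_def by (simp add: sum.distrib sum_subtractf algebra_simps)
  also have "\<dots> = 0"
    using dG_sym[of i a j k] dG_sym[of j a k i] dG_sym[of k a i j]
    by (simp add: Ga_sym[of _ i k] Ga_sym[of _ j k] Ga_sym[of _ i j])
  finally show ?thesis .
qed

lemma Riem_bianchi: "x \<in> U \<Longrightarrow> Riem g x i j k m + Riem g x j k i m + Riem g x k i j m = 0"
  unfolding Riem_def by (simp add: sum.distrib[symmetric] distrib_right[symmetric] Kcurv_bianchi)

lemma Riem_antisym12: "Riem g x i j k m = - Riem g x j i k m"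
  unfolding Riem_def by (simp add: Kcurv_antisym[of _ _ i j] sum_negf)

lemma Ric_sym:
  assumes x: "x \<in> U"
  shows "Ric g x j l = Ric g x l j"
proof -
  define G where "G i k = ginv g x i k" for i k
  have trace_0: "(\<Sum>i\<in>UNIV. \<Sum>k\<in>UNIV. G i k * Riem g x l j i k) = 0"
  proof (rule sum_sum_antisym_eq_0)
    fix a b
    show "G a b * Riem g x l j a b = - (G b a * Riem g x l j b a)"
      using Riem_antisym34[OF x, of l j a b] ginv_sym[OF x, of a b] by (simp add: G_def)
  qed
  have "Ric g x l j = (\<Sum>i\<in>UNIV. \<Sum>k\<in>UNIV. - (G i k * Riem g x i l j k))"
    unfolding Ric_def G_def
  proof (intro sum.cong refl)
    fix i k
    show "ginv g x i k * Riem g x i l k j = - (ginv g x i k * Riem g x i l j k)"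
      using Riem_antisym34[OF x, of i l k j] by simp
  qed
  also have "\<dots> = (\<Sum>i\<in>UNIV. \<Sum>k\<in>UNIV. G i k * Riem g x l j i k + G i k * Riem g x j i l k)"
  proof (intro sum.cong refl)
    fix i k
    have e: "Riem g x i l j k = -(Riem g x l j i k + Riem g x j i l k)"
      using Riem_bianchi[OF x, of i l j k] by linarith
    show "- (G i k * Riem g x i l j k) = G i k * Riem g x l j i k + G i k * Riem g x j i l k"
      unfolding e by (simp add: algebra_simps)
  qed
  also have "\<dots> = (\<Sum>i\<in>UNIV. \<Sum>k\<in>UNIV. G i k * Riem g x i j k l)"
  proof -
    have "\<And>i k. Riem g x j i l k = Riem g x i j k l"
      using Riem_antisym12 Riem_antisym34[OF x] by (metis minus_minus)
    then show ?thesis using trace_0 by (simp add: sum.distrib)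
  qed
  also have "\<dots> = Ric g x j l" unfolding Ric_def G_def ..
  finally show ?thesis by simp
qed

lemma metric_up:
  assumes x: "x \<in> U"
  shows "(\<Sum>m\<in>UNIV. g x a m * up g X x m) = X x a"
proof -
  have "(\<Sum>m\<in>UNIV. g x a m * up g X x m) = (\<Sum>l\<in>UNIV. (\<Sum>m\<in>UNIV. g x a m * ginv g x m l) * X x l)"
    unfolding up_def sum_distrib_left sum_distrib_right by (subst sum.swap) (simp add: mult.assoc)
  also have "\<dots> = (\<Sum>l\<in>UNIV. if l = a then X x l else 0)"
    by (intro sum.cong refl) (simp add: metric_ginv[OF x])
  finally show ?thesis by simp
qed

lemma Riem_up:
  assumes x: "x \<in> U"
  shows "(\<Sum>m\<in>UNIV. Riem g x i j k m * up g X x m) = (\<Sum>a\<in>UNIV. Kcurv g x a i j k * X x a)"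
proof -
  have "(\<Sum>m\<in>UNIV. Riem g x i j k m * up g X x m) =
     (\<Sum>a\<in>UNIV. \<Sum>m\<in>UNIV. Kcurv g x a i j k * (g x a m * up g X x m))"
    unfolding Riem_def sum_distrib_right by (subst sum.swap) (simp add: mult.assoc)
  also have "\<dots> = (\<Sum>a\<in>UNIV. Kcurv g x a i j k * X x a)"
    by (simp add: sum_distrib_left[symmetric] metric_up[OF x])
  finally show ?thesis .
qed

end

section \<open>Torse-forming vector fields\<close>

definition raise :: "'n::finite metric \<Rightarrow> real^'n \<Rightarrow> ('n \<Rightarrow> real) \<Rightarrow> 'n \<Rightarrow> real" where
  "raise g x X k = (\<Sum>l\<in>UNIV. ginv g x k l * X l)"

definition ginner :: "'n::finite metric \<Rightarrow> real^'n \<Rightarrow> ('n \<Rightarrow> real) \<Rightarrow> ('n \<Rightarrow> real) \<Rightarrow> real" where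
  "ginner g x X Y = (\<Sum>k\<in>UNIV. raise g x X k * Y k)"

text \<open>\<open>R\<^sub>i\<^sub>j\<^sub>k\<^sub>m X\<^sup>m\<close> at a point where \<open>\<nabla>\<^sub>i X\<^sub>j = f (X\<^sub>i X\<^sub>j + g\<^sub>i\<^sub>j)\<close>, \<open>f\<close> has value \<open>F\<close> and
  gradient \<open>D\<close> (lemma \<open>Riem_up_torse_forming\<close>).\<close>

definition torse_curvature ::
    "'n::finite metric \<Rightarrow> real^'n \<Rightarrow> ('n \<Rightarrow> real) \<Rightarrow> ('n \<Rightarrow> real) \<Rightarrow> real \<Rightarrow> 'n \<Rightarrow> 'n \<Rightarrow> 'n \<Rightarrow> real" where
  "torse_curvature g x X D F i j k =
     D i * (X j * X k + g x j k) - D j * (X i * X k + g x i k) + F^2 * (X j * g x i k - X i * g x j k)"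

lemma up_eq_raise: "up g X x = raise g x (X x)"
  unfolding up_def raise_def by (simp add: fun_eq_iff)

context lorentzian_chart
begin

lemma pd_cov_torse_forming:
  assumes x: "x \<in> U" and X: "\<And>k. smooth_on_set U (\<lambda>y. X y k)" and f: "f differentiable (at x)"
    and X_cov: "\<And>y i j. y \<in> U \<Longrightarrow> cov g X y i j = f y * (X y i * X y j + g y i j)"
  shows "pd p (\<lambda>y. cov g X y q r) x = pd p f x * (X x q * X x r + g x q r)
     + f x * (pd p (\<lambda>y. X y q) x * X x r + X x q * pd p (\<lambda>y. X y r) x + pd p (\<lambda>y. g y q r) x)"
proof -
  have dX: "\<And>a. (\<lambda>y. X y a) differentiable (at x)"
    using smooth_on_set_differentiable[OF X x] .
  have "pd p (\<lambda>y. cov g X y q r) x = pd p (\<lambda>y. f y * (X y q * X y r + g y q r)) x"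
    by (rule pd_cong_open[OF U_open x]) (rule X_cov)
  also have "\<dots> = pd p f x * (X x q * X x r + g x q r) + f x * pd p (\<lambda>y. X y q * X y r + g y q r) x"
    by (rule pd_mult[OF f]) (intro differentiable_add differentiable_mult dX metric_differentiable[OF x])
  also have "pd p (\<lambda>y. X y q * X y r + g y q r) x = pd p (\<lambda>y. X y q * X y r) x + pd p (\<lambda>y. g y q r) x"
    by (rule pd_add) (intro differentiable_add differentiable_mult dX metric_differentiable[OF x])+
  also have "pd p (\<lambda>y. X y q * X y r) x = pd p (\<lambda>y. X y q) x * X x r + X x q * pd p (\<lambda>y. X y r) x"
    by (rule pd_mult[OF dX dX])
  finally show ?thesis by simp
qed

lemma Riem_up_torse_forming:
  assumes x: "x \<in> U" and X: "\<And>k. smooth_on_set U (\<lambda>y. X y k)" and f: "f differentiable (at x)"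
    and X_cov: "\<And>y i j. y \<in> U \<Longrightarrow> cov g X y i j = f y * (X y i * X y j + g y i j)"
  shows "(\<Sum>m\<in>UNIV. Riem g x i j k m * up g X x m) = torse_curvature g x (X x) (\<lambda>k. pd k f x) (f x) i j k"
proof -
  define GX where "GX p q = (\<Sum>b\<in>UNIV. christoffel g x b p q * X x b)" for p q
  define Gg where "Gg p q r = (\<Sum>a\<in>UNIV. christoffel g x a p q * g x a r)" for p q r
  have GX_sym: "\<And>p q. GX p q = GX q p" unfolding GX_def using christoffel_sym[OF x] by simp
  have Gg_sym: "\<And>p q r. Gg p q r = Gg q p r" unfolding Gg_def using christoffel_sym[OF x] by simp
  have pd_X: "\<And>p q. pd p (\<lambda>y. X y q) x = f x * (X x p * X x q + g x p q) + GX p q"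
    using X_cov[OF x] unfolding cov_def GX_def by (metis diff_add_cancel)
  have pd_g: "\<And>p q r. pd p (\<lambda>y. g y q r) x = Gg p q r + Gg p r q"
    unfolding Gg_def using pd_metric_christoffel[OF x] by simp
  have christoffel_cov_X: "(\<Sum>a\<in>UNIV. christoffel g x a q r * cov g X x p a) = f x * (X x p * GX q r + Gg q r p)"
    for p q r
  proof -
    have "(\<Sum>a\<in>UNIV. christoffel g x a q r * cov g X x p a) =
       (\<Sum>a\<in>UNIV. f x * (X x p * (christoffel g x a q r * X x a) + christoffel g x a q r * g x a p))"
      by (intro sum.cong refl) (simp add: X_cov[OF x] metric_sym[OF x, of p] algebra_simps)
    then show ?thesis
      unfolding GX_def Gg_def by (simp add: sum_distrib_left sum.distrib distrib_left)
  qed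
  have "(\<Sum>m\<in>UNIV. Riem g x i j k m * up g X x m) =
    pd i (\<lambda>y. cov g X y j k) x - pd j (\<lambda>y. cov g X y i k) x
    + (\<Sum>a\<in>UNIV. christoffel g x a j k * cov g X x i a)
    - (\<Sum>a\<in>UNIV. christoffel g x a i k * cov g X x j a)"
    unfolding Riem_up[OF x] by (rule ricci_identity[OF x X])
  also have "\<dots> = torse_curvature g x (X x) (\<lambda>k. pd k f x) (f x) i j k"
    unfolding pd_cov_torse_forming[OF x X f X_cov, simplified] christoffel_cov_X pd_X pd_g torse_curvature_def
    using GX_sym[of i j] Gg_sym[of i j k] metric_sym[OF x, of i j]
    by (simp add: algebra_simps power2_eq_square)
  finally show ?thesis .
qed

end

section \<open>Contractions at a point\<close>

lemma raise_add: "raise g x (\<lambda>j. A j + B j) k = raise g x A k + raise g x B k"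
  unfolding raise_def by (simp add: sum.distrib algebra_simps)

lemma raise_cmult: "raise g x (\<lambda>j. c * A j) k = c * raise g x A k"
  unfolding raise_def sum_distrib_left by (simp add: mult_ac)

lemma ginner_add: "ginner g x Y (\<lambda>j. A j + B j) = ginner g x Y A + ginner g x Y B"
  unfolding ginner_def by (simp add: sum.distrib algebra_simps)

lemma ginner_diff: "ginner g x Y (\<lambda>j. A j - B j) = ginner g x Y A - ginner g x Y B"
  unfolding ginner_def by (simp add: sum_subtractf algebra_simps)

lemma ginner_minus: "ginner g x Y (\<lambda>j. - A j) = - ginner g x Y A"
  unfolding ginner_def by (simp add: sum_negf)

lemma ginner_cmult: "ginner g x Y (\<lambda>j. c * A j) = c * ginner g x Y A"
  unfolding ginner_def sum_distrib_left by (simp add: mult_ac)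

lemma ginner_multc: "ginner g x Y (\<lambda>j. A j * c) = ginner g x Y A * c"
  unfolding ginner_def sum_distrib_right by (simp add: mult_ac)

lemma ginner_divide: "ginner g x Y (\<lambda>j. A j / c) = ginner g x Y A / c"
  unfolding ginner_def by (simp add: sum_divide_distrib)

lemma ginner_add_left: "ginner g x (\<lambda>j. A j + B j) Y = ginner g x A Y + ginner g x B Y"
  unfolding ginner_def raise_add by (simp add: sum.distrib algebra_simps)

lemma ginner_cmult_left: "ginner g x (\<lambda>j. c * A j) Y = c * ginner g x A Y"
  unfolding ginner_def raise_cmult sum_distrib_left by (simp add: mult_ac)

lemmas ginner_simps = ginner_add ginner_diff ginner_minus ginner_cmult ginner_multc ginner_divide ginner_add_left ginner_cmult_left

lemma ginner_zero: "ginner g x Y (\<lambda>j. 0) = 0"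
  unfolding ginner_def by simp

lemma ginner_Ric: "ginner g x Y (Ric g x k) = (\<Sum>s\<in>UNIV. Ric g x k s * raise g x Y s)"
  unfolding ginner_def by (simp add: mult.commute)

lemma ginv_contract_ginner: "(\<Sum>a\<in>UNIV. \<Sum>k\<in>UNIV. ginv g x a k * (X a * Y k)) = ginner g x Y X"
  unfolding ginner_def raise_def by (simp add: sum_distrib_right sum_distrib_left mult_ac)

lemma sum_sum_mult_split:
  fixes P C :: "'a \<Rightarrow> real" and Q D :: "'b \<Rightarrow> real"
  shows "(\<Sum>r\<in>A. \<Sum>s\<in>B. P r * Q s * (C r * D s)) = (\<Sum>r\<in>A. P r * C r) * (\<Sum>s\<in>B. Q s * D s)"
  by (subst sum_product) (simp add: mult_ac)

context lorentzian_chart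
begin

lemma ginner_commute:
  assumes x: "x \<in> U"
  shows "ginner g x X Y = ginner g x Y X"
proof -
  have "ginner g x X Y = (\<Sum>k\<in>UNIV. \<Sum>l\<in>UNIV. ginv g x k l * X l * Y k)"
    unfolding ginner_def raise_def by (simp add: sum_distrib_right)
  also have "\<dots> = (\<Sum>l\<in>UNIV. \<Sum>k\<in>UNIV. ginv g x k l * X l * Y k)" by (rule sum.swap)
  also have "\<dots> = (\<Sum>l\<in>UNIV. (\<Sum>k\<in>UNIV. ginv g x l k * Y k) * X l)"
    apply (intro sum.cong refl)
    subgoal for l by (simp add: sum_distrib_left sum_distrib_right ginv_sym[OF x, of l] mult_ac)
    done
  also have "\<dots> = ginner g x Y X"
    unfolding ginner_def raise_def ..
  finally show ?thesis .
qed

lemma raise_lower: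
  assumes x: "x \<in> U"
  shows "(\<Sum>r\<in>UNIV. raise g x Y r * g x r k) = Y k"
proof -
  have "(\<Sum>r\<in>UNIV. raise g x Y r * g x r k) = (\<Sum>r\<in>UNIV. g x k r * up g (\<lambda>_. Y) x r)"
    unfolding up_eq_raise by (simp add: metric_sym[OF x, of k] mult.commute)
  also have "\<dots> = Y k" by (rule metric_up[OF x])
  finally show ?thesis .
qed

lemma raise_lower2:
  assumes x: "x \<in> U"
  shows "(\<Sum>r\<in>UNIV. raise g x Y r * g x k r) = Y k"
  using raise_lower[OF x, of Y k] metric_sym[OF x, of k] by simp

lemma ginner_metric:
  assumes x: "x \<in> U"
  shows "ginner g x Y (g x k) = Y k"
  using raise_lower2[OF x] unfolding ginner_def .

lemma trace_metric:
  assumes x: "x \<in> U"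
  shows "(\<Sum>a\<in>UNIV. \<Sum>k\<in>UNIV. ginv g x a k * g x a k) = real CARD('n)"
proof -
  have "\<And>a. (\<Sum>k\<in>UNIV. ginv g x a k * g x a k) = 1"
  proof -
    fix a
    have "(\<Sum>k\<in>UNIV. ginv g x a k * g x a k) = (\<Sum>k\<in>UNIV. ginv g x a k * g x k a)"
      by (intro sum.cong refl) (simp add: metric_sym[OF x, of a])
    then show "(\<Sum>k\<in>UNIV. ginv g x a k * g x a k) = 1" using ginv_metric[OF x, of a a] by simp
  qed
  then show ?thesis by simp
qed

lemma ginv_contract_metric:
  assumes x: "x \<in> U"
  shows "(\<Sum>a\<in>UNIV. \<Sum>k\<in>UNIV. ginv g x a k * (X a * g x i k)) = X i"
proof -
  have "(\<Sum>a\<in>UNIV. \<Sum>k\<in>UNIV. ginv g x a k * (X a * g x i k)) =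
        (\<Sum>a\<in>UNIV. X a * (\<Sum>k\<in>UNIV. ginv g x a k * g x k i))"
    by (simp add: sum_distrib_left metric_sym[OF x, of i] mult_ac)
  also have "\<dots> = (\<Sum>a\<in>UNIV. if a = i then X a else 0)"
    by (intro sum.cong refl) (simp add: ginv_metric[OF x])
  finally show ?thesis by simp
qed

lemma torse_curvature_contract1_sum:
  assumes x: "x \<in> U"
  shows "(\<Sum>r\<in>UNIV. raise g x Y r * torse_curvature g x X D f r j k) =
    ginner g x Y D * (X j * X k + g x j k) - D j * (ginner g x Y X * X k + Y k)
    + f^2 * (X j * Y k - ginner g x Y X * g x j k)"
proof -
  have "(\<Sum>r\<in>UNIV. raise g x Y r * torse_curvature g x X D f r j k) =
    (\<Sum>r\<in>UNIV. raise g x Y r * D r) * (X j * X k + g x j k)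
    - D j * ((\<Sum>r\<in>UNIV. raise g x Y r * X r) * X k + (\<Sum>r\<in>UNIV. raise g x Y r * g x r k))
    + f^2 * (X j * (\<Sum>r\<in>UNIV. raise g x Y r * g x r k) - (\<Sum>r\<in>UNIV. raise g x Y r * X r) * g x j k)"
    unfolding torse_curvature_def
    by (simp add: algebra_simps sum.distrib sum_subtractf sum_distrib_left sum_distrib_right)
  then show ?thesis unfolding raise_lower[OF x] ginner_def[symmetric] .
qed

lemma torse_curvature_contract1:
  assumes x: "x \<in> U"
  shows "ginner g x Y (\<lambda>r. torse_curvature g x X D f r j k) =
    ginner g x Y D * (X j * X k + g x j k) - D j * (ginner g x Y X * X k + Y k)
    + f^2 * (X j * Y k - ginner g x Y X * g x j k)"
  using torse_curvature_contract1_sum[OF x] unfolding ginner_def .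

lemma torse_curvature_contract3:
  assumes x: "x \<in> U"
  shows "(\<Sum>k\<in>UNIV. raise g x Y k * torse_curvature g x X D f i j k) =
    D i * (ginner g x Y X * X j + Y j) - D j * (ginner g x Y X * X i + Y i)
    + f^2 * (X j * Y i - X i * Y j)"
proof -
  have "(\<Sum>k\<in>UNIV. raise g x Y k * torse_curvature g x X D f i j k) =
    D i * ((\<Sum>k\<in>UNIV. raise g x Y k * X k) * X j + (\<Sum>k\<in>UNIV. raise g x Y k * g x j k))
    - D j * ((\<Sum>k\<in>UNIV. raise g x Y k * X k) * X i + (\<Sum>k\<in>UNIV. raise g x Y k * g x i k))
    + f^2 * (X j * (\<Sum>k\<in>UNIV. raise g x Y k * g x i k) - X i * (\<Sum>k\<in>UNIV. raise g x Y k * g x j k))"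
    unfolding torse_curvature_def
    by (simp add: algebra_simps sum.distrib sum_subtractf sum_distrib_left sum_distrib_right)
  then show ?thesis unfolding raise_lower2[OF x] ginner_def[symmetric] .
qed

lemma torse_curvature_trace:
  assumes x: "x \<in> U"
  shows "(\<Sum>a\<in>UNIV. \<Sum>k\<in>UNIV. ginv g x a k * torse_curvature g x X D f a i k) =
    ginner g x X D * X i + D i - D i * (ginner g x X X + real CARD('n))
    + f^2 * (real CARD('n) * X i - X i)"
proof -
  have "(\<Sum>a\<in>UNIV. \<Sum>k\<in>UNIV. ginv g x a k * torse_curvature g x X D f a i k) =
    (\<Sum>a\<in>UNIV. \<Sum>k\<in>UNIV. ginv g x a k * (D a * X k)) * X i
    + (\<Sum>a\<in>UNIV. \<Sum>k\<in>UNIV. ginv g x a k * (D a * g x i k))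
    - D i * ((\<Sum>a\<in>UNIV. \<Sum>k\<in>UNIV. ginv g x a k * (X a * X k)) + (\<Sum>a\<in>UNIV. \<Sum>k\<in>UNIV. ginv g x a k * g x a k))
    + f^2 * ((\<Sum>a\<in>UNIV. \<Sum>k\<in>UNIV. ginv g x a k * g x a k) * X i - (\<Sum>a\<in>UNIV. \<Sum>k\<in>UNIV. ginv g x a k * (X a * g x i k)))"
    unfolding torse_curvature_def
    by (simp add: algebra_simps sum.distrib sum_subtractf sum_distrib_left sum_distrib_right)
  then show ?thesis unfolding ginv_contract_metric[OF x] trace_metric[OF x] unfolding ginv_contract_ginner by simp
qed

lemma Ric_raise:
  assumes x: "x \<in> U"
  shows "(\<Sum>s\<in>UNIV. Ric g x i s * raise g x Y s) =
    (\<Sum>a\<in>UNIV. \<Sum>k\<in>UNIV. ginv g x a k * (\<Sum>s\<in>UNIV. Riem g x a i k s * raise g x Y s))"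
proof -
  have "(\<Sum>s\<in>UNIV. Ric g x i s * raise g x Y s) =
     (\<Sum>s\<in>UNIV. \<Sum>a\<in>UNIV. \<Sum>k\<in>UNIV. ginv g x a k * Riem g x a i k s * raise g x Y s)"
    unfolding Ric_def by (simp add: sum_distrib_right)
  also have "\<dots> = (\<Sum>a\<in>UNIV. \<Sum>s\<in>UNIV. \<Sum>k\<in>UNIV. ginv g x a k * Riem g x a i k s * raise g x Y s)"
    by (rule sum.swap)
  also have "\<dots> = (\<Sum>a\<in>UNIV. \<Sum>k\<in>UNIV. \<Sum>s\<in>UNIV. ginv g x a k * Riem g x a i k s * raise g x Y s)"
    by (rule sum.cong[OF refl], rule sum.swap)
  also have "\<dots> = (\<Sum>a\<in>UNIV. \<Sum>k\<in>UNIV. ginv g x a k * (\<Sum>s\<in>UNIV. Riem g x a i k s * raise g x Y s))"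
    by (simp add: sum_distrib_left mult.assoc)
  finally show ?thesis .
qed

lemma Riem_contract_antisym:
  assumes x: "x \<in> U"
  shows "(\<Sum>k\<in>UNIV. raise g x A k * (\<Sum>m\<in>UNIV. Riem g x i j k m * raise g x B m)) =
    - (\<Sum>m\<in>UNIV. raise g x B m * (\<Sum>k\<in>UNIV. Riem g x i j m k * raise g x A k))"
proof -
  have "(\<Sum>k\<in>UNIV. raise g x A k * (\<Sum>m\<in>UNIV. Riem g x i j k m * raise g x B m)) =
     (\<Sum>k\<in>UNIV. \<Sum>m\<in>UNIV. - (raise g x B m * (Riem g x i j m k * raise g x A k)))"
    unfolding sum_distrib_left
    apply (intro sum.cong refl)
    subgoal for k m using Riem_antisym34[OF x, of i j k m] by (simp add: mult_ac)
    done
  also have "\<dots> = (\<Sum>m\<in>UNIV. \<Sum>k\<in>UNIV. - (raise g x B m * (Riem g x i j m k * raise g x A k)))"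
    by (rule sum.swap)
  also have "\<dots> = - (\<Sum>m\<in>UNIV. raise g x B m * (\<Sum>k\<in>UNIV. Riem g x i j m k * raise g x A k))"
    by (simp add: sum_distrib_left sum_negf)
  finally show ?thesis .
qed

lemma ginner_Ric_sym:
  assumes x: "x \<in> U"
  shows "ginner g x A (\<lambda>k. ginner g x B (Ric g x k)) = ginner g x B (\<lambda>k. ginner g x A (Ric g x k))"
proof -
  have "ginner g x A (\<lambda>k. ginner g x B (Ric g x k)) =
      (\<Sum>k\<in>UNIV. \<Sum>s\<in>UNIV. raise g x A k * raise g x B s * Ric g x k s)"
    unfolding ginner_def by (simp add: sum_distrib_left mult_ac)
  also have "\<dots> = (\<Sum>s\<in>UNIV. \<Sum>k\<in>UNIV. raise g x A k * raise g x B s * Ric g x k s)" by (rule sum.swap)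
  also have "\<dots> = ginner g x B (\<lambda>k. ginner g x A (Ric g x k))"
    unfolding ginner_def by (simp add: sum_distrib_left Ric_sym[OF x] mult_ac)
  finally show ?thesis .
qed

lemma sum_sum_raise_metric:
  assumes x: "x \<in> U"
  shows "(\<Sum>r\<in>UNIV. \<Sum>s\<in>UNIV. raise g x Y r * raise g x Y s * (g x r s * C)) = ginner g x Y Y * C"
proof -
  have "(\<Sum>r\<in>UNIV. \<Sum>s\<in>UNIV. raise g x Y r * raise g x Y s * (g x r s * C)) =
      (\<Sum>r\<in>UNIV. raise g x Y r * (\<Sum>s\<in>UNIV. raise g x Y s * g x r s)) * C"
    by (simp add: sum_distrib_left sum_distrib_right mult_ac)
  then show ?thesis unfolding raise_lower2[OF x] ginner_def by simp
qed

lemma Weyl_contract: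
  assumes x: "x \<in> U"
  shows "(\<Sum>r\<in>UNIV. \<Sum>s\<in>UNIV. raise g x Y r * raise g x Y s * Weyl g x r i j s) =
    (\<Sum>r\<in>UNIV. raise g x Y r * (\<Sum>s\<in>UNIV. Riem g x r i j s * raise g x Y s))
    - (Y j * (\<Sum>s\<in>UNIV. Ric g x i s * raise g x Y s) - ginner g x Y Y * Ric g x i j
       - g x i j * ginner g x Y (\<lambda>r. \<Sum>s\<in>UNIV. Ric g x r s * raise g x Y s)
       + Y i * (\<Sum>s\<in>UNIV. Ric g x j s * raise g x Y s)) / (real CARD('n) - 2)
    + Scal g x * (Y i * Y j - ginner g x Y Y * g x i j) / ((real CARD('n) - 1) * (real CARD('n) - 2))"
proof -
  define N2 where "N2 = real CARD('n) - 2"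
  define N12 where "N12 = (real CARD('n) - 1) * N2"
  define Y' where "Y' = raise g x Y"
  define Sc where "Sc = Scal g x"
  have Wd: "\<And>r s. Weyl g x r i j s = Riem g x r i j s
     - (1/N2) * (g x r j * Ric g x i s) + (1/N2) * (g x r s * Ric g x i j)
     + (1/N2) * (g x i j * Ric g x r s) - (1/N2) * (g x i s * Ric g x r j)
     + (Sc/N12) * (g x r j * g x i s) - (Sc/N12) * (g x r s * g x i j)"
    unfolding Weyl_def N12_def N2_def Sc_def by (simp add: divide_inverse algebra_simps)
  have "(\<Sum>r\<in>UNIV. \<Sum>s\<in>UNIV. Y' r * Y' s * Weyl g x r i j s) =
     (\<Sum>r\<in>UNIV. \<Sum>s\<in>UNIV. Y' r * Y' s * Riem g x r i j s)
     - (1/N2) * (\<Sum>r\<in>UNIV. \<Sum>s\<in>UNIV. Y' r * Y' s * (g x r j * Ric g x i s))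
     + (1/N2) * (\<Sum>r\<in>UNIV. \<Sum>s\<in>UNIV. Y' r * Y' s * (g x r s * Ric g x i j))
     + (1/N2) * (\<Sum>r\<in>UNIV. \<Sum>s\<in>UNIV. Y' r * Y' s * (g x i j * Ric g x r s))
     - (1/N2) * (\<Sum>r\<in>UNIV. \<Sum>s\<in>UNIV. Y' r * Y' s * (Ric g x r j * g x i s))
     + (Sc/N12) * (\<Sum>r\<in>UNIV. \<Sum>s\<in>UNIV. Y' r * Y' s * (g x r j * g x i s))
     - (Sc/N12) * (\<Sum>r\<in>UNIV. \<Sum>s\<in>UNIV. Y' r * Y' s * (g x r s * g x i j))"
    unfolding Wd by (simp add: algebra_simps sum.distrib sum_subtractf sum_distrib_left)
  also have "(\<Sum>r\<in>UNIV. \<Sum>s\<in>UNIV. Y' r * Y' s * Riem g x r i j s) =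
     (\<Sum>r\<in>UNIV. Y' r * (\<Sum>s\<in>UNIV. Riem g x r i j s * Y' s))"
    by (simp add: sum_distrib_left mult_ac)
  also have "(\<Sum>r\<in>UNIV. \<Sum>s\<in>UNIV. Y' r * Y' s * (g x r j * Ric g x i s)) =
     Y j * (\<Sum>s\<in>UNIV. Ric g x i s * Y' s)"
    unfolding sum_sum_mult_split Y'_def raise_lower[OF x] by (simp add: mult_ac)
  also have "(\<Sum>r\<in>UNIV. \<Sum>s\<in>UNIV. Y' r * Y' s * (g x r s * Ric g x i j)) = ginner g x Y Y * Ric g x i j"
    unfolding Y'_def by (rule sum_sum_raise_metric[OF x])
  also have "(\<Sum>r\<in>UNIV. \<Sum>s\<in>UNIV. Y' r * Y' s * (g x i j * Ric g x r s)) =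
     g x i j * ginner g x Y (\<lambda>r. \<Sum>s\<in>UNIV. Ric g x r s * Y' s)"
    unfolding ginner_def Y'_def by (simp add: sum_distrib_left sum_distrib_right mult_ac)
  also have "(\<Sum>r\<in>UNIV. \<Sum>s\<in>UNIV. Y' r * Y' s * (Ric g x r j * g x i s)) =
     (\<Sum>r\<in>UNIV. Y' r * Ric g x r j) * Y i"
    unfolding sum_sum_mult_split Y'_def raise_lower2[OF x] ..
  also have "(\<Sum>r\<in>UNIV. Y' r * Ric g x r j) = (\<Sum>s\<in>UNIV. Ric g x j s * Y' s)"
    by (intro sum.cong refl) (simp add: Ric_sym[OF x, of _ j] mult.commute)
  also have "(\<Sum>r\<in>UNIV. \<Sum>s\<in>UNIV. Y' r * Y' s * (g x r j * g x i s)) = Y j * Y i"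
    unfolding sum_sum_mult_split Y'_def raise_lower[OF x] raise_lower2[OF x] ..
  also have "(\<Sum>r\<in>UNIV. \<Sum>s\<in>UNIV. Y' r * Y' s * (g x r s * g x i j)) = ginner g x Y Y * g x i j"
    unfolding Y'_def by (rule sum_sum_raise_metric[OF x])
  finally show ?thesis unfolding Y'_def[symmetric] Sc_def[symmetric] N2_def[symmetric] N12_def[symmetric]
    by (simp add: divide_inverse algebra_simps)
qed

end

section \<open>Two torse-forming vector fields\<close>

text \<open>The pointwise data of the theorem at a point \<open>x\<close>: \<open>F\<close> and \<open>L\<close> are the gradients of \<open>\<phi>\<close> and
  \<open>\<lambda>\<close>, \<open>phi\<close> and \<open>lam\<close> their values, \<open>c = cosh \<alpha>\<close> and \<open>s = sinh \<alpha>\<close>.\<close>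

locale torse_pair_at = lorentzian_chart U g for U and g :: "'n::finite metric" +
  fixes x :: "real^'n" and u b w F L :: "'n \<Rightarrow> real" and c s phi lam v q :: real
  assumes x: "x \<in> U" and dim: "CARD('n) > 3"
    and s_nonzero: "s \<noteq> 0" and cosh_sinh: "c^2 = 1 + s^2"
    and u_unit: "ginner g x u u = -1" and b_unit: "ginner g x b b = 1" and u_b: "ginner g x u b = 0"
    and w_eq: "w = (\<lambda>k. c * u k + s * b k)"
    and F_eq: "F = (\<lambda>k. - q * u k + v * b k)"
    and Riem_u: "\<And>i j k. (\<Sum>m\<in>UNIV. Riem g x i j k m * raise g x u m) = torse_curvature g x u F phi i j k"
    and Riem_w: "\<And>i j k. (\<Sum>m\<in>UNIV. Riem g x i j k m * raise g x w m) = torse_curvature g x w L lam i j k"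
begin

lemma b_u: "ginner g x b u = 0"
  using u_b ginner_commute[OF x] by simp

lemmas ginner_basis = u_unit b_unit u_b b_u

lemma Riem_b:
  "(\<Sum>m\<in>UNIV. Riem g x i j k m * raise g x b m) =
    (1/s) * torse_curvature g x w L lam i j k + (- c / s) * torse_curvature g x u F phi i j k"
proof -
  have "raise g x b = (\<lambda>m. (1/s) * raise g x w m + (- c / s) * raise g x u m)"
    unfolding w_eq using s_nonzero by (auto simp: fun_eq_iff raise_add raise_cmult field_simps)
  then have "(\<Sum>m\<in>UNIV. Riem g x i j k m * raise g x b m) =
      (\<Sum>m\<in>UNIV. (1/s) * (Riem g x i j k m * raise g x w m) + (- c / s) * (Riem g x i j k m * raise g x u m))"
    by (simp add: algebra_simps)
  then show ?thesis
    unfolding Riem_u[symmetric] Riem_w[symmetric] by (simp only: sum.distrib sum_distrib_left)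
qed

text \<open>Antisymmetry of \<open>R\<^sub>i\<^sub>j\<^sub>k\<^sub>m u\<^sup>k w\<^sup>m\<close> in \<open>(k, m)\<close> puts \<open>\<nabla>\<lambda>\<close> into the plane of \<open>u\<close> and \<open>b\<close>.\<close>

lemma grad_lam_in_plane:
  defines "a \<equiv> ginner g x u L" and "e \<equiv> ginner g x b L" and "\<kappa> \<equiv> lam^2 - phi^2 - q"
  shows "L = (\<lambda>k. (s * (s * a + c * e) + c * \<kappa>) * u k + (c * (s * a + c * e) + s * \<kappa>) * b k)"
proof
  fix i
  have "(\<Sum>k\<in>UNIV. raise g x u k * torse_curvature g x w L lam i j k)
      + (\<Sum>k\<in>UNIV. raise g x w k * torse_curvature g x u F phi i j k) = 0" for j
    using Riem_contract_antisym[OF x, of u _ _ w] by (simp add: Riem_u Riem_w)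
  then have "(\<lambda>j. (L i * (ginner g x u w * w j + u j) - L j * (ginner g x u w * w i + u i)
        + lam^2 * (w j * u i - w i * u j))
      + (F i * (ginner g x w u * u j + w j) - F j * (ginner g x w u * u i + w i)
        + phi^2 * (u j * w i - u i * w j))) = (\<lambda>j. 0)"
    unfolding torse_curvature_contract3[OF x] by (simp add: fun_eq_iff)
  then have "ginner g x (\<lambda>k. s * u k + c * b k) (\<lambda>j. (L i * (ginner g x u w * w j + u j)
        - L j * (ginner g x u w * w i + u i) + lam^2 * (w j * u i - w i * u j))
      + (F i * (ginner g x w u * u j + w j) - F j * (ginner g x w u * u i + w i)
        + phi^2 * (u j * w i - u i * w j))) = 0"
    by (simp add: ginner_zero)
  then have "s * L i - s * ((s * (s * a + c * e) + c * \<kappa>) * u i + (c * (s * a + c * e) + s * \<kappa>) * b i) = 0"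
    unfolding w_eq
    apply (simp add: ginner_simps ginner_basis a_def[symmetric] e_def[symmetric])
    unfolding F_eq
    apply (simp add: ginner_simps ginner_basis \<kappa>_def)
    using cosh_sinh by algebra
  then show "L i = (s * (s * a + c * e) + c * \<kappa>) * u i + (c * (s * a + c * e) + s * \<kappa>) * b i"
    using s_nonzero by (simp add: right_diff_distrib[symmetric])
qed

lemma Ric_u: "ginner g x u (Ric g x k) =
    ginner g x u F * u k + F k - F k * (ginner g x u u + real CARD('n)) + phi^2 * (real CARD('n) * u k - u k)"
  by (simp only: ginner_Ric Ric_raise[OF x] Riem_u torse_curvature_trace[OF x])

lemma Ric_b: "ginner g x b (Ric g x k) =
    (1/s) * (ginner g x w L * w k + L k - L k * (ginner g x w w + real CARD('n))
      + lam^2 * (real CARD('n) * w k - w k))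
    + (- c / s) * (ginner g x u F * u k + F k - F k * (ginner g x u u + real CARD('n))
      + phi^2 * (real CARD('n) * u k - u k))"
proof -
  have "(\<Sum>a\<in>UNIV. \<Sum>m\<in>UNIV. ginv g x a m * (\<Sum>r\<in>UNIV. Riem g x a k m r * raise g x b r)) =
      (1/s) * (\<Sum>a\<in>UNIV. \<Sum>m\<in>UNIV. ginv g x a m * torse_curvature g x w L lam a k m)
      + (- c / s) * (\<Sum>a\<in>UNIV. \<Sum>m\<in>UNIV. ginv g x a m * torse_curvature g x u F phi a k m)"
    unfolding Riem_b distrib_left sum.distrib sum_distrib_left by (simp add: algebra_simps)
  then show ?thesis
    by (simp only: ginner_Ric Ric_raise[OF x] torse_curvature_trace[OF x])
qed

text \<open>The symmetry of the Ricci tensor, through \<open>R\<^sub>i\<^sub>j u\<^sup>i b\<^sup>j = R\<^sub>i\<^sub>j b\<^sup>i u\<^sup>j\<close>, fixes the remaining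
  coefficient; this is where \<open>n > 2\<close> enters.\<close>

lemma grad_lam_eq:
  "L = (\<lambda>k. ((lam^2 - phi^2 - q) * c - v * s) * u k + ((lam^2 - phi^2 - q) * s - v * c) * b k)"
proof -
  define a where "a = ginner g x u L"
  define e where "e = ginner g x b L"
  define \<kappa> where "\<kappa> = lam^2 - phi^2 - q"
  define N where "N = real CARD('n)"
  have L_eq: "L = (\<lambda>k. (s * (s * a + c * e) + c * \<kappa>) * u k + (c * (s * a + c * e) + s * \<kappa>) * b k)"
    using grad_lam_in_plane unfolding a_def e_def \<kappa>_def .
  have "e = c * (s * a + c * e) + s * \<kappa>"
    using e_def by (subst (asm) L_eq) (simp add: ginner_simps ginner_basis)
  then have "s * (c * a + s * e + \<kappa>) = 0" using cosh_sinh by algebra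
  then have ae: "c * a + s * e = - \<kappa>" using s_nonzero by simp
  have "(N - 2) * (a - (v * s - c * \<kappa>)) = 0"
  proof -
    have "ginner g x b (\<lambda>k. ginner g x u (Ric g x k)) = ginner g x u (\<lambda>k. ginner g x b (Ric g x k))"
      by (rule ginner_Ric_sym[OF x])
    then show ?thesis
      unfolding Ric_u Ric_b w_eq F_eq N_def[symmetric]
      apply (simp add: ginner_simps ginner_basis a_def[symmetric] e_def[symmetric])
      apply (simp add: field_simps s_nonzero)
      using cosh_sinh ae unfolding \<kappa>_def by algebra
  qed
  moreover have "N - 2 \<noteq> 0" using dim by (simp add: N_def)
  ultimately have a: "a = v * s - c * \<kappa>" by simp
  then have "s * (e - (s * \<kappa> - c * v)) = 0" using ae cosh_sinh by algebra
  then have "e = s * \<kappa> - c * v" using s_nonzero by simp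
  with a show ?thesis
    unfolding L_eq \<kappa>_def[symmetric] by (intro ext) (use cosh_sinh in algebra)
qed

lemma Weyl_contract_u_b:
  "(\<Sum>r\<in>UNIV. \<Sum>s\<in>UNIV. raise g x u r * raise g x u s * Weyl g x r i j s)
   + (\<Sum>r\<in>UNIV. \<Sum>s\<in>UNIV. raise g x b r * raise g x b s * Weyl g x r i j s)
   = (u i * u j + b i * b j) * ginner g x b (\<lambda>k. ginner g x b (\<lambda>l.
       \<Sum>r\<in>UNIV. \<Sum>s\<in>UNIV. raise g x u r * raise g x u s * Weyl g x r k l s))"
proof -
  define N where "N = real CARD('n)"
  note Weyl = Weyl_contract[OF x]
  have inverses: "s * inverse s = 1" "(N - 2) * inverse (N - 2) = 1" "(N - 1) * inverse (N - 1) = 1"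
    using s_nonzero dim by (simp_all add: N_def)
  have Riem_uu: "(\<Sum>r\<in>UNIV. raise g x u r * (\<Sum>s\<in>UNIV. Riem g x r i j s * raise g x u s)) =
      ginner g x u (\<lambda>r. torse_curvature g x u F phi r i j)" for i j
    unfolding Riem_u ginner_def ..
  have Riem_bb: "(\<Sum>r\<in>UNIV. raise g x b r * (\<Sum>s\<in>UNIV. Riem g x r i j s * raise g x b s)) =
      (1/s) * ginner g x b (\<lambda>r. torse_curvature g x w L lam r i j)
      + (- c / s) * ginner g x b (\<lambda>r. torse_curvature g x u F phi r i j)" for i j
    unfolding Riem_b ginner_def[symmetric] ginner_add ginner_cmult ..
  show ?thesis
    unfolding Weyl Riem_uu Riem_bb ginner_Ric[symmetric]
    unfolding torse_curvature_contract1[OF x] Ric_u Ric_b ginner_metric[OF x]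
    unfolding w_eq F_eq grad_lam_eq
    apply (simp add: ginner_simps ginner_basis ginner_metric[OF x] Ric_b N_def[symmetric])
    unfolding w_eq F_eq grad_lam_eq
    apply (simp add: ginner_simps ginner_basis ginner_metric[OF x])
    apply (simp only: divide_inverse inverse_mult_distrib)
    using cosh_sinh inverses by algebra
qed

end
theorem mainTheorem10:
  fixes U :: "(real^'n::finite) set"
    and g :: "'n metric"
    and u w b :: "'n covf"
    and \<phi> lam v \<alpha> :: "real^'n \<Rightarrow> real"
  assumes dim: "CARD('n) > 3"
    and U_open: "open U"
    and g_smooth: "\<And>i j. smooth_on_set U (\<lambda>x. g x i j)"
    and g_lor: "\<And>x. x \<in> U \<Longrightarrow> lorentzian_form (g x)"
    and u_smooth: "\<And>i. smooth_on_set U (\<lambda>x. u x i)"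
    and w_smooth: "\<And>i. smooth_on_set U (\<lambda>x. w x i)"
    and phi_smooth: "smooth_on_set U \<phi>"
    and lam_smooth: "smooth_on_set U lam"
    and noncollinear: "\<And>x. x \<in> U \<Longrightarrow> \<not> (\<exists>c. \<forall>i. w x i = c * u x i)"
    and u_unit: "\<And>x. x \<in> U \<Longrightarrow> (\<Sum>k\<in>UNIV. up g u x k * u x k) = -1"
    and w_unit: "\<And>x. x \<in> U \<Longrightarrow> (\<Sum>k\<in>UNIV. up g w x k * w x k) = -1"
    and u_cov: "\<And>x i j. x \<in> U \<Longrightarrow> cov g u x i j = \<phi> x * (u x i * u x j + g x i j)"
    and w_cov: "\<And>x i j. x \<in> U \<Longrightarrow> cov g w x i j = lam x * (w x i * w x j + g x i j)"
    and dphi: "\<And>x k. x \<in> U \<Longrightarrow>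
        pd k \<phi> x = - u x k * (\<Sum>m\<in>UNIV. up g u x m * pd m \<phi> x) + v x * b x k"
    and v_nz: "\<And>x. x \<in> U \<Longrightarrow> v x \<noteq> 0"
    and b_unit: "\<And>x. x \<in> U \<Longrightarrow> (\<Sum>k\<in>UNIV. up g b x k * b x k) = 1"
    and ub: "\<And>x. x \<in> U \<Longrightarrow> (\<Sum>k\<in>UNIV. up g u x k * b x k) = 0"
    and w_def: "\<And>x i. x \<in> U \<Longrightarrow> w x i = u x i * cosh (\<alpha> x) + b x i * sinh (\<alpha> x)"
    and alpha_nz: "\<And>x. x \<in> U \<Longrightarrow> \<alpha> x \<noteq> 0"
  shows "\<forall>x\<in>U. \<forall>i j.
     (\<Sum>r\<in>UNIV. \<Sum>s\<in>UNIV. (up g u x r * up g u x s + up g b x r * up g b x s) * Weyl g x r i j s)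
     = (u x i * u x j + b x i * b x j) *
       (\<Sum>k\<in>UNIV. \<Sum>l\<in>UNIV. up g b x k * up g b x l * Eweyl g u x k l)"
proof (intro ballI allI)
  fix x i j
  assume x: "x \<in> U"
  interpret lorentzian_chart U g
    using U_open g_smooth g_lor by unfold_locales
  interpret torse_pair_at U g x "u x" "b x" "w x" "\<lambda>k. pd k \<phi> x" "\<lambda>k. pd k lam x"
    "cosh (\<alpha> x)" "sinh (\<alpha> x)" "\<phi> x" "lam x" "v x" "ginner g x (u x) (\<lambda>k. pd k \<phi> x)"
  proof unfold_locales
    show "(\<Sum>m\<in>UNIV. Riem g x i j k m * raise g x (u x) m) =
        torse_curvature g x (u x) (\<lambda>k. pd k \<phi> x) (\<phi> x) i j k" for i j k
      using Riem_up_torse_forming[OF x u_smooth smooth_on_set_differentiable[OF phi_smooth x] u_cov]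
      by (simp add: up_eq_raise)
    show "(\<Sum>m\<in>UNIV. Riem g x i j k m * raise g x (w x) m) =
        torse_curvature g x (w x) (\<lambda>k. pd k lam x) (lam x) i j k" for i j k
      using Riem_up_torse_forming[OF x w_smooth smooth_on_set_differentiable[OF lam_smooth x] w_cov]
      by (simp add: up_eq_raise)
    show "(\<lambda>k. pd k \<phi> x) = (\<lambda>k. - ginner g x (u x) (\<lambda>k. pd k \<phi> x) * u x k + v x * b x k)"
    proof
      fix k
      show "pd k \<phi> x = - ginner g x (u x) (\<lambda>k. pd k \<phi> x) * u x k + v x * b x k"
        using dphi[OF x, of k] by (simp add: ginner_def up_eq_raise mult.commute)
    qed
    show "w x = (\<lambda>k. cosh (\<alpha> x) * u x k + sinh (\<alpha> x) * b x k)"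
      using w_def[OF x] by (auto simp: mult.commute)
  qed (use x dim alpha_nz[OF x] u_unit[OF x] b_unit[OF x] ub[OF x] in
        \<open>simp_all add: ginner_def up_eq_raise cosh_square_eq\<close>)
  have "(\<Sum>k\<in>UNIV. \<Sum>l\<in>UNIV. up g b x k * up g b x l * Eweyl g u x k l) =
      ginner g x (b x) (\<lambda>k. ginner g x (b x) (\<lambda>l.
        \<Sum>r\<in>UNIV. \<Sum>s\<in>UNIV. raise g x (u x) r * raise g x (u x) s * Weyl g x r k l s))"
    by (simp add: Eweyl_def ginner_def up_eq_raise sum_distrib_left mult_ac)
  then show "(\<Sum>r\<in>UNIV. \<Sum>s\<in>UNIV. (up g u x r * up g u x s + up g b x r * up g b x s) * Weyl g x r i j s)
     = (u x i * u x j + b x i * b x j) *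
       (\<Sum>k\<in>UNIV. \<Sum>l\<in>UNIV. up g b x k * up g b x l * Eweyl g u x k l)"
    using Weyl_contract_u_b[of i j] by (simp add: up_eq_raise distrib_right sum.distrib)
qed

end
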